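(* Let $\varphi\colon\Gamma\to K$ be a surjective homomorphism of discrete groups. Then for every $\mathbb{R}$-generated Banach $K$-module $V$, the restriction map $H^2_b(\varphi;V)\colon H^2_b(K;V)\to H^2_b(\Gamma;\varphi^{-1}V)$ is injective.
   Context: An $\mathbb{R}$-generated Banach $K$-module is one of the form $\ell^\infty(S,\mathbb{R})$ for a $K$-set $S$, with $(k\cdot f)(s)=f(k^{-1}s)$. $\varphi^{-1}V$ is $V$ with $\Gamma$ acting through $\varphi$, and the restriction map is induced by precomposition with $\varphi$ on bounded invariant cochains of the standard resolution. *)

theory Defs
  imports Complex_Main "HOL-Algebra.Group_Action"
begin

text \<open>Homogeneous (n+1)-tuples of group elements, represented as lists.\<close>
definition tuples :: "('g,'m) monoid_scheme \<Rightarrow> nat \<Rightarrow> 'g list set" where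
  "tuples G n = {xs. length xs = Suc n \<and> set xs \<subseteq> carrier G}"

definition face :: "nat \<Rightarrow> 'g list \<Rightarrow> 'g list" where
  "face i xs = take i xs @ drop (Suc i) xs"

text \<open>Cochains with values in l^infty(S,R) are functions 'g list => 's => real.
  Homogeneous coboundary operator from degree n to degree n+1.\<close>
definition cobdry :: "nat \<Rightarrow> ('g list \<Rightarrow> 's \<Rightarrow> real) \<Rightarrow> 'g list \<Rightarrow> 's \<Rightarrow> real" where
  "cobdry n f = (\<lambda>xs s. \<Sum>i\<le>Suc n. (-1) ^ i * f (face i xs) s)"

text \<open>Bounded G-invariant n-cochains of the standard resolution with coefficients
  l^infty(S,R), where (g.f)(s) = f(g^{-1} s).\<close>
definition binv_cochains ::
  "('g,'m) monoid_scheme \<Rightarrow> 's set \<Rightarrow> ('g \<Rightarrow> 's \<Rightarrow> 's) \<Rightarrow> nat \<Rightarrow> ('g list \<Rightarrow> 's \<Rightarrow> real) set" where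
  "binv_cochains G S act n =
     {f. (\<exists>C. \<forall>xs\<in>tuples G n. \<forall>s\<in>S. \<bar>f xs s\<bar> \<le> C) \<and>
         (\<forall>g\<in>carrier G. \<forall>xs\<in>tuples G n. \<forall>s\<in>S.
             f (map (\<lambda>x. g \<otimes>\<^bsub>G\<^esub> x) xs) s = f xs (act (inv\<^bsub>G\<^esub> g) s))}"

definition bcocycles ::
  "('g,'m) monoid_scheme \<Rightarrow> 's set \<Rightarrow> ('g \<Rightarrow> 's \<Rightarrow> 's) \<Rightarrow> nat \<Rightarrow> ('g list \<Rightarrow> 's \<Rightarrow> real) set" where
  "bcocycles G S act n =
     {f \<in> binv_cochains G S act n. \<forall>xs\<in>tuples G (Suc n). \<forall>s\<in>S. cobdry n f xs s = 0}"

text \<open>Coboundaries in degree n+1 (equality in l^infty(S) means equality on S).\<close>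
definition bcoboundaries ::
  "('g,'m) monoid_scheme \<Rightarrow> 's set \<Rightarrow> ('g \<Rightarrow> 's \<Rightarrow> 's) \<Rightarrow> nat \<Rightarrow> ('g list \<Rightarrow> 's \<Rightarrow> real) set" where
  "bcoboundaries G S act n =
     {f. \<exists>b\<in>binv_cochains G S act n. \<forall>xs\<in>tuples G (Suc n). \<forall>s\<in>S. f xs s = cobdry n b xs s}"

definition cohrel ::
  "('g,'m) monoid_scheme \<Rightarrow> 's set \<Rightarrow> ('g \<Rightarrow> 's \<Rightarrow> 's) \<Rightarrow> nat \<Rightarrow> (('g list \<Rightarrow> 's \<Rightarrow> real) \<times> ('g list \<Rightarrow> 's \<Rightarrow> real)) set" where
  "cohrel G S act n =
     {(f, h). f \<in> bcocycles G S act (Suc n) \<and> h \<in> bcocycles G S act (Suc n) \<and>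
              (\<lambda>xs s. f xs s - h xs s) \<in> bcoboundaries G S act n}"

text \<open>Bounded cohomology H^{n+1}_b(G; l^infty(S,R)) as a set of classes.\<close>
definition Hb ::
  "('g,'m) monoid_scheme \<Rightarrow> 's set \<Rightarrow> ('g \<Rightarrow> 's \<Rightarrow> 's) \<Rightarrow> nat \<Rightarrow> ('g list \<Rightarrow> 's \<Rightarrow> real) set set" where
  "Hb G S act n = bcocycles G S act (Suc n) // cohrel G S act n"

definition res :: "('a \<Rightarrow> 'b) \<Rightarrow> ('b list \<Rightarrow> 's \<Rightarrow> real) \<Rightarrow> 'a list \<Rightarrow> 's \<Rightarrow> real" where
  "res \<phi> c = (\<lambda>xs. c (map \<phi> xs))"

text \<open>Induced map H^{n+1}_b(K; V) -> H^{n+1}_b(Gamma; phi^{-1} V) on classes.\<close>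
definition Hres ::
  "('a,'m) monoid_scheme \<Rightarrow> 's set \<Rightarrow> ('b \<Rightarrow> 's \<Rightarrow> 's) \<Rightarrow> ('a \<Rightarrow> 'b) \<Rightarrow> nat \<Rightarrow>
   ('b list \<Rightarrow> 's \<Rightarrow> real) set \<Rightarrow> ('a list \<Rightarrow> 's \<Rightarrow> real) set" where
  "Hres \<Gamma> S act \<phi> n C = (\<Union>c\<in>C. cohrel \<Gamma> S (\<lambda>\<gamma>. act (\<phi> \<gamma>)) n `` {res \<phi> c})"

end

theory Submission
  imports Defs
begin

text \<open>Let \<open>f\<close> be a bounded \<open>K\<close>-invariant 2-cocycle whose pullback to \<open>\<Gamma>\<close> is the
  coboundary of a bounded \<open>\<Gamma>\<close>-invariant 1-cochain \<open>b\<close>. For \<open>g\<close> in the kernel of \<open>\<phi>\<close>,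
  the cocycle identity on \<open>(x, g\<^bsup>j\<^esup>x, g\<^bsup>j+1\<^esup>x)\<close> together with the invariance of \<open>b\<close>
  under \<open>g\<^bsup>j\<^esup>\<close> shows that \<open>j \<mapsto> b(x, g\<^bsup>j\<^esup>x) - f(\<phi> x, \<phi> x, \<phi> x)\<close> is additive in
  \<open>j\<close>; being bounded, it vanishes. Hence \<open>b(x, z)\<close> only depends on \<open>\<phi> x\<close> and \<open>\<phi> z\<close>,
  so \<open>b\<close> descends along the surjection \<open>\<phi>\<close> to a bounded \<open>K\<close>-invariant cochain with
  coboundary \<open>f\<close>.\<close>

lemma tuples_1_iff:
  "xs \<in> tuples G 1 \<longleftrightarrow> (\<exists>x y. xs = [x, y] \<and> x \<in> carrier G \<and> y \<in> carrier G)"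
  by (auto simp: tuples_def length_Suc_conv)

lemma tuples_2_iff:
  "xs \<in> tuples G 2 \<longleftrightarrow>
    (\<exists>x y z. xs = [x, y, z] \<and> x \<in> carrier G \<and> y \<in> carrier G \<and> z \<in> carrier G)"
  by (auto simp: tuples_def length_Suc_conv numeral_2_eq_2)

lemma tuples_3_iff:
  "xs \<in> tuples G 3 \<longleftrightarrow>
    (\<exists>x y z w. xs = [x, y, z, w] \<and> x \<in> carrier G \<and> y \<in> carrier G \<and> z \<in> carrier G \<and> w \<in> carrier G)"
  by (auto simp: tuples_def length_Suc_conv numeral_3_eq_3)

lemma face_in_tuples:
  assumes "xs \<in> tuples G (Suc n)" and "i \<le> Suc n"
  shows "face i xs \<in> tuples G n"
  using assms set_take_subset[of i xs] set_drop_subset[of "Suc i" xs]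
  by (auto simp: tuples_def face_def)

lemma face_map: "face i (map g xs) = map g (face i xs)"
  by (simp add: face_def take_map drop_map)

lemma cobdry_1: "cobdry 1 b [x, y, z] s = b [y, z] s - b [x, z] s + b [x, y] s"
  by (simp add: cobdry_def face_def numeral_2_eq_2 atMost_Suc)

lemma cobdry_2:
  "cobdry 2 f [x, y, z, w] s = f [y, z, w] s - f [x, z, w] s + f [x, y, w] s - f [x, y, z] s"
  by (simp add: cobdry_def face_def numeral_3_eq_3 numeral_2_eq_2 atMost_Suc)

lemma cobdry_add: "cobdry n (\<lambda>xs s. f xs s + g xs s) xs s = cobdry n f xs s + cobdry n g xs s"
  by (simp add: cobdry_def sum.distrib distrib_left)

lemma cobdry_uminus: "cobdry n (\<lambda>xs s. - f xs s) xs s = - cobdry n f xs s"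
  by (simp add: cobdry_def sum_negf)

lemma cobdry_diff: "cobdry n (\<lambda>xs s. f xs s - g xs s) xs s = cobdry n f xs s - cobdry n g xs s"
  by (simp add: cobdry_def sum_subtractf right_diff_distrib)

lemma cobdry_cong:
  assumes "\<And>ys. ys \<in> tuples G n \<Longrightarrow> f ys s = g ys s" and "xs \<in> tuples G (Suc n)"
  shows "cobdry n f xs s = cobdry n g xs s"
  unfolding cobdry_def by (intro sum.cong refl) (simp add: assms(1) face_in_tuples[OF assms(2)])

lemma cobdry_res: "cobdry n (res \<phi> f) xs s = cobdry n f (map \<phi> xs) s"
  by (simp add: cobdry_def res_def face_map)

lemma binv_cochains_invariant:
  assumes "f \<in> binv_cochains G S act n" "g \<in> carrier G" "xs \<in> tuples G n" "s \<in> S"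
  shows "f (map (\<lambda>x. g \<otimes>\<^bsub>G\<^esub> x) xs) s = f xs (act (inv\<^bsub>G\<^esub> g) s)"
  using assms unfolding binv_cochains_def by blast

lemma binv_cochains_bounded:
  assumes "f \<in> binv_cochains G S act n"
  obtains C where "\<And>xs s. xs \<in> tuples G n \<Longrightarrow> s \<in> S \<Longrightarrow> \<bar>f xs s\<bar> \<le> C"
  using assms unfolding binv_cochains_def by blast

lemma binv_cochains_zero: "(\<lambda>xs s. 0) \<in> binv_cochains G S act n"
  unfolding binv_cochains_def by auto

lemma binv_cochains_uminus:
  "f \<in> binv_cochains G S act n \<Longrightarrow> (\<lambda>xs s. - f xs s) \<in> binv_cochains G S act n"
  unfolding binv_cochains_def by auto

lemma binv_cochains_add:
  assumes f: "f \<in> binv_cochains G S act n" and g: "g \<in> binv_cochains G S act n"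
  shows "(\<lambda>xs s. f xs s + g xs s) \<in> binv_cochains G S act n"
proof -
  obtain Cf Cg where "\<forall>xs\<in>tuples G n. \<forall>s\<in>S. \<bar>f xs s\<bar> \<le> Cf" "\<forall>xs\<in>tuples G n. \<forall>s\<in>S. \<bar>g xs s\<bar> \<le> Cg"
    using f g unfolding binv_cochains_def by blast
  then have "\<forall>xs\<in>tuples G n. \<forall>s\<in>S. \<bar>f xs s + g xs s\<bar> \<le> Cf + Cg"
    by (meson abs_triangle_ineq add_mono order_trans)
  then show ?thesis
    using f g unfolding binv_cochains_def by auto
qed

lemma bcocycles_binv_cochains: "f \<in> bcocycles G S act n \<Longrightarrow> f \<in> binv_cochains G S act n"
  by (simp add: bcocycles_def)

lemma bcocycles_diff:
  assumes "f \<in> bcocycles G S act n" and "g \<in> bcocycles G S act n"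
  shows "(\<lambda>xs s. f xs s - g xs s) \<in> bcocycles G S act n"
proof -
  have "(\<lambda>xs s. f xs s + - g xs s) \<in> binv_cochains G S act n"
    using assms by (intro binv_cochains_add binv_cochains_uminus) (auto simp: bcocycles_def)
  then show ?thesis
    using assms by (auto simp: bcocycles_def cobdry_diff)
qed

lemma bcoboundaries_zero: "(\<lambda>xs s. 0) \<in> bcoboundaries G S act n"
  unfolding bcoboundaries_def
  by (intro CollectI bexI[of _ "\<lambda>xs s. 0"]) (auto simp: cobdry_def binv_cochains_zero)

lemma bcoboundaries_uminus:
  assumes "f \<in> bcoboundaries G S act n"
  shows "(\<lambda>xs s. - f xs s) \<in> bcoboundaries G S act n"
proof -
  obtain b where "b \<in> binv_cochains G S act n" "\<forall>xs\<in>tuples G (Suc n). \<forall>s\<in>S. f xs s = cobdry n b xs s"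
    using assms unfolding bcoboundaries_def by blast
  then show ?thesis
    unfolding bcoboundaries_def
    by (intro CollectI bexI[of _ "\<lambda>xs s. - b xs s"]) (auto simp: cobdry_uminus binv_cochains_uminus)
qed

lemma bcoboundaries_add:
  assumes "f \<in> bcoboundaries G S act n" and "g \<in> bcoboundaries G S act n"
  shows "(\<lambda>xs s. f xs s + g xs s) \<in> bcoboundaries G S act n"
proof -
  obtain b c where
    "b \<in> binv_cochains G S act n" "\<forall>xs\<in>tuples G (Suc n). \<forall>s\<in>S. f xs s = cobdry n b xs s"
    "c \<in> binv_cochains G S act n" "\<forall>xs\<in>tuples G (Suc n). \<forall>s\<in>S. g xs s = cobdry n c xs s"
    using assms unfolding bcoboundaries_def by blast
  then show ?thesis
    unfolding bcoboundaries_def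
    by (intro CollectI bexI[of _ "\<lambda>xs s. b xs s + c xs s"]) (auto simp: cobdry_add binv_cochains_add)
qed

lemma cohrel_equiv: "equiv (bcocycles G S act (Suc n)) (cohrel G S act n)"
proof (rule equivI)
  show "cohrel G S act n \<subseteq> bcocycles G S act (Suc n) \<times> bcocycles G S act (Suc n)"
    unfolding cohrel_def by auto
  show "refl_on (bcocycles G S act (Suc n)) (cohrel G S act n)"
    unfolding refl_on_def cohrel_def using bcoboundaries_zero by auto
  show "sym (cohrel G S act n)"
    unfolding cohrel_def by (rule symI) (auto dest: bcoboundaries_uminus)
  show "trans (cohrel G S act n)"
    unfolding cohrel_def by (rule transI) (auto dest: bcoboundaries_add)
qed

lemma nat_multiples_bounded_imp_zero:
  fixes d :: real
  assumes "\<And>j::nat. \<bar>real j * d\<bar> \<le> C"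
  shows "d = 0"
proof (rule ccontr)
  assume "d \<noteq> 0"
  then obtain j :: nat where "C < real j * \<bar>d\<bar>"
    using ex_less_of_nat_mult[of "\<bar>d\<bar>"] by auto
  with assms[of j] show False
    by (simp add: abs_mult)
qed

lemma bcocycle_2_degenerate:
  assumes f: "f \<in> bcocycles G S act 2" and "k \<in> carrier G" "l \<in> carrier G" "s \<in> S"
  shows "f [k, k, l] s = f [k, k, k] s" and "f [k, l, l] s = f [l, l, l] s"
proof -
  have "cobdry 2 f xs s = 0" if "xs \<in> tuples G 3" for xs
    using f that \<open>s \<in> S\<close> by (auto simp: bcocycles_def numeral_3_eq_3 numeral_2_eq_2)
  from this[of "[k, k, k, l]"] this[of "[k, l, l, l]"] show
    "f [k, k, l] s = f [k, k, k] s" and "f [k, l, l] s = f [l, l, l] s"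
    using assms by (simp_all add: tuples_3_iff cobdry_2)
qed

locale pullback = h: group_hom G K \<phi> + A: group_action K S act
  for G :: "('a, 'c) monoid_scheme" and K :: "('b, 'd) monoid_scheme"
    and \<phi> :: "'a \<Rightarrow> 'b" and S :: "'s set" and act :: "'b \<Rightarrow> 's \<Rightarrow> 's"
begin

lemma map_in_tuples: "xs \<in> tuples G n \<Longrightarrow> map \<phi> xs \<in> tuples K n"
  by (auto simp: tuples_def)

lemma lift_tuples:
  assumes surj: "\<phi> ` carrier G = carrier K" and xs: "xs \<in> tuples K n"
  shows "map (inv_into (carrier G) \<phi>) xs \<in> tuples G n"
    and "map \<phi> (map (inv_into (carrier G) \<phi>) xs) = xs"
proof -
  have "inv_into (carrier G) \<phi> k \<in> carrier G" "\<phi> (inv_into (carrier G) \<phi> k) = k"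
    if "k \<in> carrier K" for k
    using that surj by (auto intro: inv_into_into f_inv_into_f)
  then show "map (inv_into (carrier G) \<phi>) xs \<in> tuples G n"
    and "map \<phi> (map (inv_into (carrier G) \<phi>) xs) = xs"
    using xs by (auto simp: tuples_def intro!: map_idI)
qed

lemma act_inv_kernel:
  assumes "g \<in> carrier G" "\<phi> g = \<one>\<^bsub>K\<^esub>" "s \<in> S"
  shows "act (\<phi> (inv\<^bsub>G\<^esub> g)) s = s"
  using assms by (metis A.id_eq_one h.hom_inv h.H.inv_one restrict_apply')

lemma res_bcocycles:
  assumes f: "f \<in> bcocycles K S act n"
  shows "res \<phi> f \<in> bcocycles G S (\<lambda>\<gamma>. act (\<phi> \<gamma>)) n"
proof -
  obtain C where "\<And>xs s. xs \<in> tuples K n \<Longrightarrow> s \<in> S \<Longrightarrow> \<bar>f xs s\<bar> \<le> C"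
    using binv_cochains_bounded[OF bcocycles_binv_cochains[OF f]] by blast
  then have bounded: "\<forall>xs\<in>tuples G n. \<forall>s\<in>S. \<bar>res \<phi> f xs s\<bar> \<le> C"
    by (simp add: res_def map_in_tuples)
  have "res \<phi> f (map (\<lambda>x. g \<otimes>\<^bsub>G\<^esub> x) xs) s = res \<phi> f xs (act (\<phi> (inv\<^bsub>G\<^esub> g)) s)"
    if "g \<in> carrier G" "xs \<in> tuples G n" "s \<in> S" for g xs s
  proof -
    have "map \<phi> (map (\<lambda>x. g \<otimes>\<^bsub>G\<^esub> x) xs) = map (\<lambda>x. \<phi> g \<otimes>\<^bsub>K\<^esub> x) (map \<phi> xs)"
      using that by (auto simp: tuples_def)
    then have "res \<phi> f (map (\<lambda>x. g \<otimes>\<^bsub>G\<^esub> x) xs) s = f (map (\<lambda>x. \<phi> g \<otimes>\<^bsub>K\<^esub> x) (map \<phi> xs)) s"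
      by (simp only: res_def)
    also have "\<dots> = f (map \<phi> xs) (act (inv\<^bsub>K\<^esub> \<phi> g) s)"
      using bcocycles_binv_cochains[OF f] that by (intro binv_cochains_invariant map_in_tuples) auto
    finally show ?thesis
      using that by (simp add: res_def h.hom_inv)
  qed
  moreover have "\<forall>xs\<in>tuples G (Suc n). \<forall>s\<in>S. cobdry n (res \<phi> f) xs s = 0"
    using f map_in_tuples by (auto simp: bcocycles_def cobdry_res)
  ultimately show ?thesis
    using bounded unfolding bcocycles_def binv_cochains_def by blast
qed

lemma inj_on_Hres:
  assumes res_coboundary: "\<And>f. f \<in> bcocycles K S act (Suc n) \<Longrightarrow>
      res \<phi> f \<in> bcoboundaries G S (\<lambda>\<gamma>. act (\<phi> \<gamma>)) n \<Longrightarrow> f \<in> bcoboundaries K S act n"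
  shows "inj_on (Hres G S act \<phi> n) (Hb K S act n)"
proof (rule inj_onI)
  fix C1 C2
  assume C1: "C1 \<in> Hb K S act n" and C2: "C2 \<in> Hb K S act n"
    and eq: "Hres G S act \<phi> n C1 = Hres G S act \<phi> n C2"
  note equiv_K = cohrel_equiv[of K S act n]
  note equiv_G = cohrel_equiv[of G S "\<lambda>\<gamma>. act (\<phi> \<gamma>)" n]
  obtain f where f: "f \<in> bcocycles K S act (Suc n)" "C1 = cohrel K S act n `` {f}"
    using C1 unfolding Hb_def by (auto elim: quotientE)
  have "f \<in> C1"
    using equiv_class_self[OF equiv_K f(1)] f(2) by simp
  then have "res \<phi> f \<in> Hres G S act \<phi> n C1"
    unfolding Hres_def using equiv_class_self[OF equiv_G res_bcocycles[OF f(1)]] by blast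
  then obtain c where c: "c \<in> C2" and rc: "(res \<phi> c, res \<phi> f) \<in> cohrel G S (\<lambda>\<gamma>. act (\<phi> \<gamma>)) n"
    using eq unfolding Hres_def by blast
  have c_cocycle: "c \<in> bcocycles K S act (Suc n)"
    using C2 c in_quotient_imp_subset[OF equiv_K] unfolding Hb_def by blast
  have "res \<phi> (\<lambda>xs s. f xs s - c xs s) = (\<lambda>xs s. - (res \<phi> c xs s - res \<phi> f xs s))"
    by (simp add: res_def)
  then have "res \<phi> (\<lambda>xs s. f xs s - c xs s) \<in> bcoboundaries G S (\<lambda>\<gamma>. act (\<phi> \<gamma>)) n"
    using rc bcoboundaries_uminus unfolding cohrel_def by fastforce
  then have "(f, c) \<in> cohrel K S act n"
    using res_coboundary bcocycles_diff f(1) c_cocycle unfolding cohrel_def by blast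
  then show "C1 = C2"
    using quotient_eqI[OF equiv_K] C1 C2 \<open>f \<in> C1\<close> c unfolding Hb_def by blast
qed

context
  fixes f b
  assumes f: "f \<in> bcocycles K S act 2"
    and b: "b \<in> binv_cochains G S (\<lambda>\<gamma>. act (\<phi> \<gamma>)) 1"
    and res_f: "\<And>xs s. xs \<in> tuples G 2 \<Longrightarrow> s \<in> S \<Longrightarrow> res \<phi> f xs s = cobdry 1 b xs s"
begin

lemma primitive_triangle:
  assumes "x \<in> carrier G" "y \<in> carrier G" "z \<in> carrier G" "s \<in> S"
  shows "f [\<phi> x, \<phi> y, \<phi> z] s = b [y, z] s - b [x, z] s + b [x, y] s"
  using res_f[of "[x, y, z]" s] assms unfolding res_def cobdry_1 by (simp add: tuples_2_iff)

lemma primitive_kernel_translate: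
  assumes x: "x \<in> carrier G" and g: "g \<in> carrier G" "\<phi> g = \<one>\<^bsub>K\<^esub>" and s: "s \<in> S"
  shows "b [x, g \<otimes>\<^bsub>G\<^esub> x] s = f [\<phi> x, \<phi> x, \<phi> x] s"
proof -
  define E where "E = f [\<phi> x, \<phi> x, \<phi> x] s"
  define d where "d = b [x, g \<otimes>\<^bsub>G\<^esub> x] s - E"
  have translate: "b [h \<otimes>\<^bsub>G\<^esub> y, h \<otimes>\<^bsub>G\<^esub> z] s = b [y, z] s"
    if "h \<in> carrier G" "\<phi> h = \<one>\<^bsub>K\<^esub>" "y \<in> carrier G" "z \<in> carrier G" for h y z
  proof -
    have "[y, z] \<in> tuples G 1"
      using that by (simp add: tuples_def)
    from b that(1) this s have "b (map (\<lambda>x. h \<otimes>\<^bsub>G\<^esub> x) [y, z]) s = b [y, z] (act (\<phi> (inv\<^bsub>G\<^esub> h)) s)"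
      by (rule binv_cochains_invariant)
    then show ?thesis
      using act_inv_kernel[OF that(1,2) s] by simp
  qed
  have multiple: "b [x, g [^]\<^bsub>G\<^esub> j \<otimes>\<^bsub>G\<^esub> x] s - E = real j * d" for j :: nat
  proof (induction j)
    case 0
    then show ?case
      using primitive_triangle[of x x x s] x s by (simp add: E_def)
  next
    case (Suc j)
    define h where "h = g [^]\<^bsub>G\<^esub> j"
    have h: "h \<in> carrier G" "\<phi> h = \<one>\<^bsub>K\<^esub>"
      using g by (simp_all add: h_def h.hom_nat_pow)
    have "g [^]\<^bsub>G\<^esub> Suc j \<otimes>\<^bsub>G\<^esub> x = h \<otimes>\<^bsub>G\<^esub> (g \<otimes>\<^bsub>G\<^esub> x)"
      using g x by (simp add: h_def h.G.nat_pow_Suc h.G.m_assoc)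
    moreover have "E = b [h \<otimes>\<^bsub>G\<^esub> x, h \<otimes>\<^bsub>G\<^esub> (g \<otimes>\<^bsub>G\<^esub> x)] s
        - b [x, h \<otimes>\<^bsub>G\<^esub> (g \<otimes>\<^bsub>G\<^esub> x)] s + b [x, h \<otimes>\<^bsub>G\<^esub> x] s"
      using primitive_triangle[of x "h \<otimes>\<^bsub>G\<^esub> x" "h \<otimes>\<^bsub>G\<^esub> (g \<otimes>\<^bsub>G\<^esub> x)" s] h g x s
      by (simp add: E_def)
    ultimately show ?case
      using Suc.IH translate[of h x "g \<otimes>\<^bsub>G\<^esub> x"] h g x
      by (simp add: h_def d_def algebra_simps)
  qed
  obtain Cb where Cb: "\<And>xs s. xs \<in> tuples G 1 \<Longrightarrow> s \<in> S \<Longrightarrow> \<bar>b xs s\<bar> \<le> Cb"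
    using binv_cochains_bounded[OF b] by blast
  obtain Cf where Cf: "\<And>xs s. xs \<in> tuples K 2 \<Longrightarrow> s \<in> S \<Longrightarrow> \<bar>f xs s\<bar> \<le> Cf"
    using binv_cochains_bounded[OF bcocycles_binv_cochains[OF f]] by blast
  have "\<bar>real j * d\<bar> \<le> Cb + Cf" for j :: nat
  proof -
    have "\<bar>b [x, g [^]\<^bsub>G\<^esub> j \<otimes>\<^bsub>G\<^esub> x] s\<bar> \<le> Cb"
      using Cb[of "[x, g [^]\<^bsub>G\<^esub> j \<otimes>\<^bsub>G\<^esub> x]" s] g x s by (simp add: tuples_def)
    moreover have "\<bar>E\<bar> \<le> Cf"
      using Cf[of "[\<phi> x, \<phi> x, \<phi> x]" s] x s by (simp add: E_def tuples_def)
    ultimately show ?thesis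
      using multiple[of j] by linarith
  qed
  then have "d = 0"
    by (rule nat_multiples_bounded_imp_zero)
  then show ?thesis
    by (simp add: d_def E_def)
qed

lemma primitive_diagonal:
  assumes "x \<in> carrier G" "x' \<in> carrier G" "\<phi> x = \<phi> x'" "s \<in> S"
  shows "b [x, x'] s = f [\<phi> x, \<phi> x, \<phi> x] s"
proof -
  have "x' = (x' \<otimes>\<^bsub>G\<^esub> inv\<^bsub>G\<^esub> x) \<otimes>\<^bsub>G\<^esub> x" "\<phi> (x' \<otimes>\<^bsub>G\<^esub> inv\<^bsub>G\<^esub> x) = \<one>\<^bsub>K\<^esub>"
    using assms by (simp_all add: h.G.m_assoc h.hom_inv)
  then show ?thesis
    using primitive_kernel_translate[of x "x' \<otimes>\<^bsub>G\<^esub> inv\<^bsub>G\<^esub> x" s] assms by simp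
qed

lemma primitive_factors:
  assumes x: "x \<in> carrier G" "x' \<in> carrier G" "\<phi> x = \<phi> x'"
    and z: "z \<in> carrier G" "z' \<in> carrier G" "\<phi> z = \<phi> z'" and s: "s \<in> S"
  shows "b [x, z] s = b [x', z'] s"
proof -
  have "b [x', z] s = b [x, z] s"
    using primitive_triangle[of x x' z s] primitive_diagonal[of x x' s]
      bcocycle_2_degenerate(1)[OF f, of "\<phi> x" "\<phi> z" s] x z s
    by simp
  moreover have "b [x', z'] s = b [x', z] s"
    using primitive_triangle[of x' z z' s] primitive_diagonal[of z z' s]
      bcocycle_2_degenerate(2)[OF f, of "\<phi> x'" "\<phi> z" s] x z s
    by simp
  ultimately show ?thesis
    by simp
qed

end

lemma descend_binv_cochain:
  assumes surj: "\<phi> ` carrier G = carrier K"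
    and b: "b \<in> binv_cochains G S (\<lambda>\<gamma>. act (\<phi> \<gamma>)) n"
    and factors: "\<And>xs ys s. xs \<in> tuples G n \<Longrightarrow> ys \<in> tuples G n \<Longrightarrow> map \<phi> xs = map \<phi> ys \<Longrightarrow>
        s \<in> S \<Longrightarrow> b xs s = b ys s"
  obtains c where "c \<in> binv_cochains K S act n"
    and "\<And>xs s. xs \<in> tuples G n \<Longrightarrow> s \<in> S \<Longrightarrow> res \<phi> c xs s = b xs s"
proof
  define \<sigma> where "\<sigma> = inv_into (carrier G) \<phi>"
  have \<sigma>: "\<sigma> k \<in> carrier G" "\<phi> (\<sigma> k) = k" if "k \<in> carrier K" for k
    using that surj unfolding \<sigma>_def by (auto intro: inv_into_into f_inv_into_f)
  note \<sigma>_tuples = lift_tuples[OF surj, folded \<sigma>_def]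
  define c where "c = (\<lambda>xs. b (map \<sigma> xs))"
  obtain C where C: "\<And>xs s. xs \<in> tuples G n \<Longrightarrow> s \<in> S \<Longrightarrow> \<bar>b xs s\<bar> \<le> C"
    using binv_cochains_bounded[OF b] by blast
  have bounded: "\<forall>xs\<in>tuples K n. \<forall>s\<in>S. \<bar>c xs s\<bar> \<le> C"
    using C \<sigma>_tuples(1) by (simp add: c_def)
  have invariant: "c (map (\<lambda>x. g \<otimes>\<^bsub>K\<^esub> x) xs) s = c xs (act (inv\<^bsub>K\<^esub> g) s)"
    if g: "g \<in> carrier K" and xs: "xs \<in> tuples K n" and s: "s \<in> S" for g xs s
  proof -
    let ?lift = "map (\<lambda>x. \<sigma> g \<otimes>\<^bsub>G\<^esub> x) (map \<sigma> xs)"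
    have "?lift \<in> tuples G n"
      using \<sigma>_tuples(1)[OF xs] \<sigma>(1)[OF g] by (auto simp: tuples_def)
    moreover have "map \<phi> ?lift = map (\<lambda>x. g \<otimes>\<^bsub>K\<^esub> x) xs"
      using xs \<sigma> g by (auto simp: tuples_def)
    moreover have "map (\<lambda>x. g \<otimes>\<^bsub>K\<^esub> x) xs \<in> tuples K n"
      using xs g by (auto simp: tuples_def)
    ultimately have "c (map (\<lambda>x. g \<otimes>\<^bsub>K\<^esub> x) xs) s = b ?lift s"
      unfolding c_def using factors s \<sigma>_tuples by metis
    also have "\<dots> = b (map \<sigma> xs) (act (\<phi> (inv\<^bsub>G\<^esub> \<sigma> g)) s)"
      using b \<sigma>(1)[OF g] \<sigma>_tuples(1)[OF xs] s by (rule binv_cochains_invariant)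
    also have "\<dots> = c xs (act (inv\<^bsub>K\<^esub> g) s)"
      using \<sigma>[OF g] by (simp add: c_def h.hom_inv)
    finally show ?thesis .
  qed
  show "c \<in> binv_cochains K S act n"
    unfolding binv_cochains_def using bounded invariant by blast
  show "res \<phi> c xs s = b xs s" if "xs \<in> tuples G n" "s \<in> S" for xs s
    using factors[of "map \<sigma> (map \<phi> xs)" xs s] \<sigma>_tuples[OF map_in_tuples] that
    by (simp add: res_def c_def)
qed

lemma bcoboundary_if_res_bcoboundary:
  assumes surj: "\<phi> ` carrier G = carrier K"
    and f: "f \<in> bcocycles K S act 2"
    and res_f: "res \<phi> f \<in> bcoboundaries G S (\<lambda>\<gamma>. act (\<phi> \<gamma>)) 1"
  shows "f \<in> bcoboundaries K S act 1"
proof -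
  obtain b where b: "b \<in> binv_cochains G S (\<lambda>\<gamma>. act (\<phi> \<gamma>)) 1"
    and res_f_b: "\<And>xs s. xs \<in> tuples G 2 \<Longrightarrow> s \<in> S \<Longrightarrow> res \<phi> f xs s = cobdry 1 b xs s"
    using res_f unfolding bcoboundaries_def by (auto simp: numeral_2_eq_2)
  have "b xs s = b ys s"
    if xs: "xs \<in> tuples G 1" and ys: "ys \<in> tuples G 1"
      and fibre: "map \<phi> xs = map \<phi> ys" and s: "s \<in> S" for xs ys s
  proof -
    obtain x z x' z' where "xs = [x, z]" "ys = [x', z']"
      and "x \<in> carrier G" "z \<in> carrier G" "x' \<in> carrier G" "z' \<in> carrier G"
      using xs ys unfolding tuples_1_iff by blast
    then show ?thesis
      using fibre s primitive_factors[OF f b res_f_b, of x x' z z' s] by simp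
  qed
  then obtain c where c: "c \<in> binv_cochains K S act 1"
    and res_c: "\<And>xs s. xs \<in> tuples G 1 \<Longrightarrow> s \<in> S \<Longrightarrow> res \<phi> c xs s = b xs s"
    using descend_binv_cochain[OF surj b] by blast
  have "f xs s = cobdry 1 c xs s" if xs: "xs \<in> tuples K 2" and s: "s \<in> S" for xs s
  proof -
    define ys where "ys = map (inv_into (carrier G) \<phi>) xs"
    have ys: "ys \<in> tuples G 2" "xs = map \<phi> ys"
      using lift_tuples[OF surj xs] unfolding ys_def by simp_all
    then have "f xs s = cobdry 1 b ys s"
      using res_f_b s by (simp add: res_def)
    also have "\<dots> = cobdry 1 (res \<phi> c) ys s"
      using res_c s ys(1) by (intro cobdry_cong[where G = G]) (auto simp: numeral_2_eq_2)
    finally show ?thesis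
      using ys(2) by (simp add: cobdry_res)
  qed
  then show ?thesis
    using c unfolding bcoboundaries_def by (auto simp: numeral_2_eq_2)
qed

end

theorem mainTheorem11:
  fixes \<Gamma> :: "('a,'m) monoid_scheme" and K :: "('b,'n) monoid_scheme"
    and \<phi> :: "'a \<Rightarrow> 'b" and S :: "'s set" and act :: "'b \<Rightarrow> 's \<Rightarrow> 's"
  assumes "group \<Gamma>" and "group K"
    and "\<phi> \<in> hom \<Gamma> K" and "\<phi> ` carrier \<Gamma> = carrier K"
    and "group_action K S act"
  shows "inj_on (Hres \<Gamma> S act \<phi> 1) (Hb K S act 1)"
proof -
  interpret pullback \<Gamma> K \<phi> S act
    using assms by (simp add: pullback_def group_hom_def group_hom_axioms_def)
  show ?thesis
    using inj_on_Hres bcoboundary_if_res_bcoboundary[OF assms(4)] by (simp add: numeral_2_eq_2)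
qed

end
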